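(* Let $G$ be a locally compact group, $K$ a compact subgroup with normalized Haar measure $dk$, $\delta>0$, and $\mu$ a continuous unitary character of $G$. Let $f,g\in\mathcal{C}(G)$ with $f$ unbounded satisfy $$\Big|\int_K f(xkyk^{-1})\,dk+\mu(y)\int_K f(xky^{-1}k^{-1})\,dk-2f(x)g(y)\Big|\le\delta\quad\text{for all }x,y\in G.$$ Then for all $x,y\in G$, $$\int_K g(xkyk^{-1})\,dk+\mu(y)\int_K g(xky^{-1}k^{-1})\,dk+\int_K g(ykxk^{-1})\,dk+\mu(y)\int_K g(y^{-1}kxk^{-1})\,dk=4g(x)g(y).$$
   Context: A unitary character is a continuous homomorphism $\mu:G\to\{z\in\mathbb{C}:|z|=1\}$. *)

theory Defs
  imports "HOL-Analysis.Analysis" "HOL-Algebra.Group"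
begin

definition locally_compact_group :: "('a, 'b) monoid_scheme \<Rightarrow> 'a topology \<Rightarrow> bool" where
  "locally_compact_group G X \<longleftrightarrow>
     group G \<and> topspace X = carrier G \<and>
     continuous_map (prod_topology X X) X (\<lambda>(x, y). x \<otimes>\<^bsub>G\<^esub> y) \<and>
     continuous_map X X (\<lambda>x. inv\<^bsub>G\<^esub> x) \<and>
     Hausdorff_space X \<and> locally_compact_space X"

definition unitary_character :: "('a, 'b) monoid_scheme \<Rightarrow> 'a topology \<Rightarrow> ('a \<Rightarrow> complex) \<Rightarrow> bool" where
  "unitary_character G X \<mu> \<longleftrightarrow>
     continuous_map X euclidean \<mu> \<and>
     (\<forall>x\<in>carrier G. cmod (\<mu> x) = 1) \<and>
     (\<forall>x\<in>carrier G. \<forall>y\<in>carrier G. \<mu> (x \<otimes>\<^bsub>G\<^esub> y) = \<mu> x * \<mu> y)"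

text \<open>M is the normalized Haar measure of the compact subgroup K: a regular (Radon)
  left-invariant probability measure on the Borel sets of K.\<close>
definition normalized_haar :: "('a, 'b) monoid_scheme \<Rightarrow> 'a topology \<Rightarrow> 'a set \<Rightarrow> 'a measure \<Rightarrow> bool" where
  "normalized_haar G X K M \<longleftrightarrow>
     space M = K \<and>
     sets M = sigma_sets K {U. openin (subtopology X K) U} \<and>
     emeasure M K = 1 \<and>
     (\<forall>k\<in>K. \<forall>A\<in>sets M. emeasure M ((\<lambda>a. k \<otimes>\<^bsub>G\<^esub> a) ` A) = emeasure M A) \<and>
     (\<forall>A\<in>sets M. emeasure M A =
        (INF U\<in>{U. openin (subtopology X K) U \<and> A \<subseteq> U}. emeasure M U)) \<and>
     (\<forall>U. openin (subtopology X K) U \<longrightarrow>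
        emeasure M U = (SUP C\<in>{C. compactin X C \<and> C \<subseteq> U}. emeasure M C))"

end

theory Submission
  imports Defs "HOL-Probability.Probability_Measure"
begin

(*
  Write P_\<phi>(a, b) for the average of \<phi>(a k b k\<inverse>) over k \<in> K. Integrating the hypothesis
  along conjugates of its second argument shows that 2 f(x) P_g(a, b) is, up to \<delta>, a double
  average of f; integrating it along conjugates of its first argument shows that
  2 g(b) P_f(x, c) is, up to \<delta>, the same kind of double average. Left invariance of dk and
  Fubini identify the double averages, and a fixed linear combination of ten such estimates
  gives |2 f(x)| |D(y, z)| \<le> C(y, z) \<delta> for every x, where D(y, z) is the difference of the
  two sides of the claimed identity. Since f is unbounded, D(y, z) = 0.

  Fubini is not available for the Borel sets of a non-second-countable compact space, so it is
  proved directly for jointly continuous integrands by uniform approximation with step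
  functions subordinate to a finite open cover.
*)

section \<open>Continuous functions on products with a compact factor\<close>

lemma continuous_map_fix_right:
  assumes "continuous_map (prod_topology S T) Z (\<lambda>p. \<Phi> (fst p) (snd p))" and "k \<in> topspace T"
  shows "continuous_map S Z (\<lambda>h. \<Phi> h k)"
proof -
  have "continuous_map S (prod_topology S T) (\<lambda>h. (h, k))"
    using assms(2) by (intro continuous_map_pairedI continuous_map_id continuous_map_const[THEN iffD2]) auto
  from continuous_map_compose[OF this assms(1)] show ?thesis by (simp add: o_def)
qed

lemma continuous_map_fix_left:
  assumes "continuous_map (prod_topology S T) Z (\<lambda>p. \<Phi> (fst p) (snd p))" and "h \<in> topspace S"
  shows "continuous_map T Z (\<lambda>k. \<Phi> h k)"
proof -
  have "continuous_map T (prod_topology S T) (\<lambda>k. (h, k))"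
    using assms(2) by (intro continuous_map_pairedI continuous_map_id continuous_map_const[THEN iffD2]) auto
  from continuous_map_compose[OF this assms(1)] show ?thesis by (simp add: o_def)
qed

lemma continuous_map_swap_args:
  assumes "continuous_map (prod_topology S T) Z (\<lambda>p. \<Phi> (fst p) (snd p))"
  shows "continuous_map (prod_topology T S) Z (\<lambda>p. \<Phi> (snd p) (fst p))"
proof -
  have "continuous_map (prod_topology T S) (prod_topology S T) (\<lambda>p. (snd p, fst p))"
    by (intro continuous_map_pairedI continuous_map_fst continuous_map_snd)
  from continuous_map_compose[OF this assms] show ?thesis by (simp add: o_def)
qed

lemma continuous_map_euclidean_comp:
  "continuous_map Y euclidean \<phi> \<Longrightarrow> continuous_map Z Y a \<Longrightarrow> continuous_map Z euclidean (\<lambda>z. \<phi> (a z))"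
  using continuous_map_compose[of Z Y a euclidean \<phi>] by (simp add: o_def)

lemma continuous_map_euclidean_mult:
  fixes f g :: "'a \<Rightarrow> 'b::real_normed_algebra"
  shows "\<lbrakk>continuous_map X euclidean f; continuous_map X euclidean g\<rbrakk> \<Longrightarrow> continuous_map X euclidean (\<lambda>x. f x * g x)"
  by (simp add: continuous_map_atin tendsto_mult)

lemma continuous_map_uniform_in_compact_factor:
  fixes \<Phi> :: "'a \<Rightarrow> 'b \<Rightarrow> 'c::real_normed_vector"
  assumes S: "compact_space S"
    and \<Phi>: "continuous_map (prod_topology S T) euclidean (\<lambda>p. \<Phi> (fst p) (snd p))"
    and e: "e > 0" and k0: "k0 \<in> topspace T"
  shows "\<exists>V. openin T V \<and> k0 \<in> V \<and> (\<forall>h\<in>topspace S. \<forall>k\<in>V. norm (\<Phi> h k - \<Phi> h k0) < e)"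
proof -
  define W where "W = {p \<in> topspace (prod_topology S T). \<Phi> (fst p) (snd p) - \<Phi> (fst p) k0 \<in> ball 0 e}"
  have "continuous_map (prod_topology S T) (prod_topology S T) (\<lambda>p. (fst p, k0))"
    using k0 by (intro continuous_map_pairedI continuous_map_fst continuous_map_const[THEN iffD2]) auto
  from continuous_map_compose[OF this \<Phi>]
  have "continuous_map (prod_topology S T) euclidean (\<lambda>p. \<Phi> (fst p) (snd p) - \<Phi> (fst p) k0)"
    using \<Phi> by (intro continuous_map_diff) (simp_all add: o_def)
  then have "openin (prod_topology S T) W"
    unfolding W_def by (rule openin_continuous_map_preimage) auto
  moreover have "compactin S (topspace S)" using S compact_space_def by blast
  moreover have "topspace S \<times> {k0} \<subseteq> W" using k0 e by (auto simp: W_def)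
  ultimately obtain U V where UV: "openin T V" "k0 \<in> V" "topspace S \<subseteq> U" "U \<times> V \<subseteq> W"
    using tube_lemma_left[OF _ _ k0] by metis
  show ?thesis
  proof (intro exI conjI ballI)
    fix h k assume "h \<in> topspace S" "k \<in> V"
    then have "(h, k) \<in> W" using UV by auto
    then show "norm (\<Phi> h k - \<Phi> h k0) < e" by (auto simp: W_def dist_norm norm_minus_commute)
  qed (use UV in auto)
qed

section \<open>Borel probability measures on compact spaces\<close>

lemma (in finite_measure) has_bochner_integral_step_function:
  assumes "\<And>j. j \<in> J \<Longrightarrow> A j \<in> sets M"
  shows "has_bochner_integral M (\<lambda>k. \<Sum>j\<in>J. indicator (A j) k *\<^sub>R c j) (\<Sum>j\<in>J. measure M (A j) *\<^sub>R c j)"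
  using assms by (intro has_bochner_integral_sum has_bochner_integral_indicator) (auto simp: less_top[symmetric])

locale compact_borel_probability =
  fixes T :: "'a topology" and M :: "'a measure"
  assumes compact: "compact_space T"
    and space_eq: "space M = topspace T"
    and sets_eq: "sets M = sigma_sets (topspace T) {U. openin T U}"
    and emeasure_space: "emeasure M (topspace T) = 1"
begin

sublocale prob_space M
  by standard (simp add: space_eq emeasure_space)

lemma openin_sets: "openin T U \<Longrightarrow> U \<in> sets M"
  by (simp add: sets_eq)

lemma borel_measurable_continuous_map:
  assumes "continuous_map T euclidean (\<phi> :: 'a \<Rightarrow> 'b::topological_space)"
  shows "\<phi> \<in> borel_measurable M"
proof (rule borel_measurableI)
  fix S :: "'b set" assume "open S"
  then have "openin T {x \<in> topspace T. \<phi> x \<in> S}"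
    using assms openin_continuous_map_preimage by fastforce
  moreover have "\<phi> -` S \<inter> space M = {x \<in> topspace T. \<phi> x \<in> S}" using space_eq by auto
  ultimately show "\<phi> -` S \<inter> space M \<in> sets M" using openin_sets by simp
qed

lemma integrable_continuous_map:
  assumes \<phi>: "continuous_map T euclidean (\<phi> :: 'a \<Rightarrow> 'b::{banach,second_countable_topology})"
  shows "integrable M \<phi>"
proof -
  have "compactin euclidean (\<phi> ` topspace T)"
    using image_compactin compact \<phi> compact_space_def by blast
  then have "bounded (\<phi> ` topspace T)" by (simp add: compact_imp_bounded)
  then obtain B where "\<And>x. x \<in> topspace T \<Longrightarrow> norm (\<phi> x) \<le> B"
    unfolding bounded_iff by blast
  then show ?thesis
    by (intro integrable_const_bound[where B=B]) (auto simp: space_eq borel_measurable_continuous_map \<phi>)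
qed

lemma norm_integral_diff_le:
  fixes f g :: "'a \<Rightarrow> 'b::{banach,second_countable_topology}"
  assumes "integrable M f" "integrable M g" "\<And>x. x \<in> topspace T \<Longrightarrow> norm (f x - g x) \<le> e"
  shows "norm (integral\<^sup>L M f - integral\<^sup>L M g) \<le> e"
proof -
  have "norm (integral\<^sup>L M f - integral\<^sup>L M g) = norm (LINT x|M. f x - g x)"
    using assms by (simp add: integral_diff)
  also have "\<dots> \<le> (LINT x|M. norm (f x - g x))" by (rule integral_norm_bound)
  also have "\<dots> \<le> (LINT x|M. e)"
    using assms by (intro integral_mono) (auto simp: space_eq)
  also have "\<dots> = e" by (simp add: prob_space)
  finally show ?thesis .
qed

lemma continuous_map_parametric_integral:
  fixes \<Phi> :: "'a \<Rightarrow> 'a \<Rightarrow> 'b::{banach,second_countable_topology}"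
  assumes \<Phi>: "continuous_map (prod_topology T T) euclidean (\<lambda>p. \<Phi> (fst p) (snd p))"
  shows "continuous_map T euclidean (\<lambda>k. LINT h|M. \<Phi> h k)"
  unfolding mtopology_is_euclidean[symmetric] Met_TC.continuous_map_to_metric
proof (intro ballI allI impI)
  fix k0 and e :: real assume k0: "k0 \<in> topspace T" and e: "e > 0"
  obtain V where V: "openin T V" "k0 \<in> V"
    and close: "\<And>h k. h \<in> topspace T \<Longrightarrow> k \<in> V \<Longrightarrow> norm (\<Phi> h k - \<Phi> h k0) < e/2"
    using continuous_map_uniform_in_compact_factor[OF compact \<Phi>, of "e/2" k0] e k0 by auto
  show "\<exists>U. openin T U \<and> k0 \<in> U \<and> (\<forall>k\<in>U. (LINT h|M. \<Phi> h k) \<in> Met_TC.mball (LINT h|M. \<Phi> h k0) e)"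
  proof (intro exI conjI ballI)
    fix k assume k: "k \<in> V"
    then have "k \<in> topspace T" using V openin_subset by blast
    then have "norm ((LINT h|M. \<Phi> h k) - (LINT h|M. \<Phi> h k0)) \<le> e/2"
      using close[OF _ k] k0
      by (intro norm_integral_diff_le integrable_continuous_map continuous_map_fix_right[OF \<Phi>])
         (auto intro: less_imp_le)
    then show "(LINT h|M. \<Phi> h k) \<in> Met_TC.mball (LINT h|M. \<Phi> h k0) e"
      using e by (simp add: dist_norm norm_minus_commute)
  qed (use V in auto)
qed

lemma uniform_step_approximation:
  fixes \<Phi> :: "'a \<Rightarrow> 'a \<Rightarrow> 'b::real_normed_vector"
  assumes \<Phi>: "continuous_map (prod_topology T T) euclidean (\<lambda>p. \<Phi> (fst p) (snd p))" and e: "e > 0"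
  obtains n :: nat and p A where "\<And>j. j < n \<Longrightarrow> p j \<in> topspace T" "\<And>j. j < n \<Longrightarrow> A j \<in> sets M"
    and "\<And>h k. h \<in> topspace T \<Longrightarrow> k \<in> topspace T \<Longrightarrow>
           norm (\<Phi> h k - (\<Sum>j<n. indicator (A j) k *\<^sub>R \<Phi> h (p j))) \<le> e"
proof -
  obtain V where V: "\<And>k0. k0 \<in> topspace T \<Longrightarrow>
      openin T (V k0) \<and> k0 \<in> V k0 \<and> (\<forall>h\<in>topspace T. \<forall>k\<in>V k0. norm (\<Phi> h k - \<Phi> h k0) < e)"
    using continuous_map_uniform_in_compact_factor[OF compact \<Phi> e] by metis
  have "compactin T (topspace T)" using compact compact_space_def by blast
  then obtain F where F: "finite F" "F \<subseteq> V ` topspace T" "topspace T \<subseteq> \<Union>F"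
    using compactinD[of T "topspace T" "V ` topspace T"] V by blast
  then obtain C where C: "C \<subseteq> topspace T" "finite C" "F = V ` C"
    by (meson finite_subset_image)
  then obtain n :: nat and p where np: "C = p ` {..<n}"
    using finite_imp_nat_seg_image_inj_on lessThan_def by metis
  have p: "\<And>j. j < n \<Longrightarrow> p j \<in> topspace T" using np C by auto
  have cover: "\<And>k. k \<in> topspace T \<Longrightarrow> \<exists>j<n. k \<in> V (p j)"
    using F C np by blast
  define A where "A j = V (p j) - (\<Union>i<j. V (p i))" for j
  have A_sets: "A j \<in> sets M" if "j < n" for j
    unfolding A_def using V p openin_sets that by (intro sets.Diff sets.finite_UN) auto
  have step_eq: "(\<Sum>j<n. indicator (A j) k *\<^sub>R \<Phi> h (p j)) = \<Phi> h (p i)"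
    if "i < n" "k \<in> V (p i)" "\<And>j. j < i \<Longrightarrow> k \<notin> V (p j)" for h k i
  proof -
    have "k \<in> A j \<longleftrightarrow> j = i" if "j < n" for j
      using \<open>k \<in> V (p i)\<close> \<open>\<And>j. j < i \<Longrightarrow> k \<notin> V (p j)\<close> by (auto simp: A_def) (meson lessThan_iff nat_neq_iff)
    then have "(\<Sum>j<n. indicator (A j) k *\<^sub>R \<Phi> h (p j)) = (\<Sum>j<n. if j = i then \<Phi> h (p j) else 0)"
      by (intro sum.cong) (auto simp: indicator_def)
    then show ?thesis using \<open>i < n\<close> by simp
  qed
  show thesis
  proof (rule that[OF p A_sets])
    fix h k assume h: "h \<in> topspace T" and k: "k \<in> topspace T"
    define i where "i = (LEAST i. i < n \<and> k \<in> V (p i))"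
    have i: "i < n \<and> k \<in> V (p i)" unfolding i_def using cover[OF k] by (rule LeastI_ex)
    moreover have "\<And>j. j < i \<Longrightarrow> k \<notin> V (p j)"
      using not_less_Least i i_def by fastforce
    ultimately have "(\<Sum>j<n. indicator (A j) k *\<^sub>R \<Phi> h (p j)) = \<Phi> h (p i)"
      by (intro step_eq) auto
    moreover have "norm (\<Phi> h k - \<Phi> h (p i)) < e" using V[OF p] h i by blast
    ultimately show "norm (\<Phi> h k - (\<Sum>j<n. indicator (A j) k *\<^sub>R \<Phi> h (p j))) \<le> e" by simp
  qed
qed

lemma norm_iterated_integral_diff_le:
  fixes \<Phi> \<Psi> :: "'a \<Rightarrow> 'a \<Rightarrow> 'b::{banach,second_countable_topology}"
  assumes "integrable M (\<lambda>k. LINT h|M. \<Phi> h k)" "integrable M (\<lambda>k. LINT h|M. \<Psi> h k)"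
    and "\<And>k. k \<in> topspace T \<Longrightarrow> integrable M (\<lambda>h. \<Phi> h k)"
    and "\<And>k. k \<in> topspace T \<Longrightarrow> integrable M (\<lambda>h. \<Psi> h k)"
    and "\<And>h k. h \<in> topspace T \<Longrightarrow> k \<in> topspace T \<Longrightarrow> norm (\<Phi> h k - \<Psi> h k) \<le> e"
  shows "norm ((LINT k|M. LINT h|M. \<Phi> h k) - (LINT k|M. LINT h|M. \<Psi> h k)) \<le> e"
  using assms by (intro norm_integral_diff_le) auto

lemma integral_swap_continuous:
  fixes \<Phi> :: "'a \<Rightarrow> 'a \<Rightarrow> 'b::{banach,second_countable_topology}"
  assumes \<Phi>: "continuous_map (prod_topology T T) euclidean (\<lambda>p. \<Phi> (fst p) (snd p))"
  shows "(LINT k|M. LINT h|M. \<Phi> h k) = (LINT h|M. LINT k|M. \<Phi> h k)"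
proof -
  note \<Phi>_swap = continuous_map_swap_args[OF \<Phi>]
  have "norm ((LINT k|M. LINT h|M. \<Phi> h k) - (LINT h|M. LINT k|M. \<Phi> h k)) \<le> 0 + e" if "e > 0" for e
  proof -
    obtain n :: nat and p A where p: "\<And>j. j < n \<Longrightarrow> p j \<in> topspace T"
      and A: "\<And>j. j < n \<Longrightarrow> A j \<in> sets M"
      and approx: "\<And>h k. h \<in> topspace T \<Longrightarrow> k \<in> topspace T \<Longrightarrow>
             norm (\<Phi> h k - (\<Sum>j<n. indicator (A j) k *\<^sub>R \<Phi> h (p j))) \<le> e/2"
      using uniform_step_approximation[OF \<Phi>, of "e/2"] \<open>e > 0\<close> by auto
    define step where "step h k = (\<Sum>j<n. indicator (A j) k *\<^sub>R \<Phi> h (p j))" for h k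
    define S where "S = (\<Sum>j<n. measure M (A j) *\<^sub>R (LINT h|M. \<Phi> h (p j)))"
    have slice: "integrable M (\<lambda>h. \<Phi> h (p j))" if "j < n" for j
      using p that by (intro integrable_continuous_map continuous_map_fix_right[OF \<Phi>])
    have step_k: "has_bochner_integral M (\<lambda>k. step h k) (\<Sum>j<n. measure M (A j) *\<^sub>R \<Phi> h (p j))" for h
      unfolding step_def using A by (intro has_bochner_integral_step_function) auto
    have step_h: "integrable M (\<lambda>h. step h k)" for k
      unfolding step_def using slice by auto
    have approx_step: "norm (\<Phi> h k - step h k) \<le> e/2" if "h \<in> topspace T" "k \<in> topspace T" for h k
      unfolding step_def using approx that .
    have "has_bochner_integral M (\<lambda>k. LINT h|M. step h k) S"
    proof -
      have "(LINT h|M. step h k) = (\<Sum>j<n. indicator (A j) k *\<^sub>R (LINT h|M. \<Phi> h (p j)))" for k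
        using slice by (simp add: step_def)
      then show ?thesis
        unfolding S_def using A by (simp only:) (rule has_bochner_integral_step_function, simp)
    qed
    moreover have "has_bochner_integral M (\<lambda>h. LINT k|M. step h k) S"
      unfolding S_def has_bochner_integral_integral_eq[OF step_k] using slice
      by (intro has_bochner_integral_sum has_bochner_integral_scaleR_right has_bochner_integral_integrable) auto
    moreover have "norm ((LINT k|M. LINT h|M. \<Phi> h k) - (LINT k|M. LINT h|M. step h k)) \<le> e/2"
      using step_h approx_step
      by (intro norm_iterated_integral_diff_le integrable.intros[OF calculation(1)]
          integrable_continuous_map[OF continuous_map_parametric_integral[OF \<Phi>]]
          integrable_continuous_map[OF continuous_map_fix_right[OF \<Phi>]]) auto
    moreover have "norm ((LINT h|M. LINT k|M. \<Phi> h k) - (LINT h|M. LINT k|M. step h k)) \<le> e/2"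
      using step_k approx_step
      by (intro norm_iterated_integral_diff_le[where \<Phi>="\<lambda>k h. \<Phi> h k" and \<Psi>="\<lambda>k h. step h k"]
          integrable.intros[OF calculation(2)]
          integrable_continuous_map[OF continuous_map_parametric_integral[OF \<Phi>_swap]]
          integrable_continuous_map[OF continuous_map_fix_left[OF \<Phi>]])
         (auto intro: integrable.intros)
    ultimately show ?thesis
      using norm_triangle_ineq4[of "(LINT k|M. LINT h|M. \<Phi> h k) - S" "(LINT h|M. LINT k|M. \<Phi> h k) - S"]
      by (simp add: has_bochner_integral_integral_eq algebra_simps)
  qed
  then show ?thesis by (metis field_le_epsilon norm_le_zero_iff right_minus_eq)
qed

end

section \<open>Averages over a compact subgroup\<close>

lemma (in group) inv_mult_cancel_left: "a \<in> carrier G \<Longrightarrow> b \<in> carrier G \<Longrightarrow> inv a \<otimes> (a \<otimes> b) = b"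
  by (simp add: m_assoc[symmetric])

lemma (in group) mult_inv_cancel_left: "a \<in> carrier G \<Longrightarrow> b \<in> carrier G \<Longrightarrow> a \<otimes> (inv a \<otimes> b) = b"
  by (simp add: m_assoc[symmetric])

locale compact_subgroup_haar =
  fixes G :: "('a, 'b) monoid_scheme" (structure) and X :: "'a topology" and K :: "'a set"
    and M :: "'a measure"
  assumes lcg: "locally_compact_group G X"
    and subgroup_K: "subgroup K G" and compact_K: "compactin X K"
    and haar: "normalized_haar G X K M"
begin

abbreviation "T \<equiv> subtopology X K"

sublocale group G
  using lcg by (simp add: locally_compact_group_def)

lemma topspace_X: "topspace X = carrier G"
  using lcg by (simp add: locally_compact_group_def)

lemma K_subset_carrier: "K \<subseteq> carrier G"
  using subgroup_K subgroup.subset by blast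

lemma topspace_T: "topspace T = K"
  using K_subset_carrier topspace_X by auto

sublocale compact_borel_probability T M
  unfolding compact_borel_probability_def using haar compact_K topspace_T
  by (auto simp: normalized_haar_def compact_space_subtopology)

lemma continuous_map_G_mult:
  assumes "continuous_map Z X a" "continuous_map Z X b"
  shows "continuous_map Z X (\<lambda>z. a z \<otimes> b z)"
proof -
  have "continuous_map (prod_topology X X) X (\<lambda>(x, y). x \<otimes> y)"
    using lcg by (simp add: locally_compact_group_def)
  from continuous_map_compose[OF continuous_map_pairedI[OF assms] this] show ?thesis
    by (simp add: o_def)
qed

lemma continuous_map_G_inv:
  assumes "continuous_map Z X a"
  shows "continuous_map Z X (\<lambda>z. inv (a z))"
proof -
  have "continuous_map X X (\<lambda>x. inv x)"
    using lcg by (simp add: locally_compact_group_def)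
  from continuous_map_compose[OF assms this] show ?thesis by (simp add: o_def)
qed

lemma continuous_map_G_const: "c \<in> carrier G \<Longrightarrow> continuous_map Z X (\<lambda>z. c)"
  by (simp add: topspace_X)

lemma continuous_map_K_incl: "continuous_map T X (\<lambda>k. k)"
  by (simp add: continuous_map_from_subtopology)

lemma continuous_map_K_fst: "continuous_map (prod_topology T T) X fst"
  using continuous_map_compose[OF continuous_map_fst continuous_map_K_incl] by (simp add: o_def)

lemma continuous_map_K_snd: "continuous_map (prod_topology T T) X snd"
  using continuous_map_compose[OF continuous_map_snd continuous_map_K_incl] by (simp add: o_def)

lemmas continuous_map_G_intros =
  continuous_map_G_mult continuous_map_G_inv continuous_map_G_const
  continuous_map_K_incl continuous_map_K_fst continuous_map_K_snd

lemma integral_left_translation: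
  assumes h: "h \<in> K"
    and \<phi>: "continuous_map T euclidean (\<phi> :: 'a \<Rightarrow> 'c::{banach,second_countable_topology})"
  shows "(LINT k|M. \<phi> (h \<otimes> k)) = (LINT k|M. \<phi> k)"
proof -
  have h_carrier: "h \<in> carrier G" and inv_h: "inv h \<in> K"
    using h K_subset_carrier subgroup.m_inv_closed[OF subgroup_K] by auto
  have cont: "continuous_map T T (\<lambda>k. h \<otimes> k)"
    unfolding continuous_map_in_subtopology using h subgroup_K topspace_T
    by (auto intro!: continuous_map_G_intros h_carrier simp: subgroup.m_closed)
  have meas: "(\<lambda>k. h \<otimes> k) \<in> measurable M M"
  proof (rule measurable_sigma_sets[OF sets_eq])
    show "{U. openin T U} \<subseteq> Pow (topspace T)" using openin_subset[of T] by blast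
    show "(\<lambda>k. h \<otimes> k) \<in> space M \<rightarrow> topspace T"
      using cont by (auto simp: space_eq continuous_map_def)
    fix U assume "U \<in> {U. openin T U}"
    then have "openin T {x \<in> topspace T. h \<otimes> x \<in> U}"
      using cont openin_continuous_map_preimage by fastforce
    moreover have "(\<lambda>k. h \<otimes> k) -` U \<inter> space M = {x \<in> topspace T. h \<otimes> x \<in> U}" using space_eq by auto
    ultimately show "(\<lambda>k. h \<otimes> k) -` U \<inter> space M \<in> sets M" using openin_sets by simp
  qed
  have "distr M M (\<lambda>k. h \<otimes> k) = M"
  proof (rule measure_eqI)
    fix A assume "A \<in> sets (distr M M (\<lambda>k. h \<otimes> k))"
    then have A: "A \<in> sets M" by simp
    then have "A \<subseteq> K" using sets.sets_into_space space_eq topspace_T by blast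
    then have "(\<lambda>k. h \<otimes> k) -` A \<inter> space M = (\<lambda>a. inv h \<otimes> a) ` A"
    proof (intro equalityI subsetI)
      fix x assume x: "x \<in> (\<lambda>k. h \<otimes> k) -` A \<inter> space M"
      then have "x \<in> carrier G" using space_eq topspace_T K_subset_carrier by auto
      with x h_carrier show "x \<in> (\<lambda>a. inv h \<otimes> a) ` A"
        by (auto intro!: image_eqI[of _ _ "h \<otimes> x"] simp: inv_mult_cancel_left)
    next
      fix x assume "x \<in> (\<lambda>a. inv h \<otimes> a) ` A"
      then obtain a where a: "a \<in> A" "x = inv h \<otimes> a" by blast
      with \<open>A \<subseteq> K\<close> have "a \<in> K" by auto
      with a h_carrier inv_h K_subset_carrier subgroup.m_closed[OF subgroup_K inv_h]
      show "x \<in> (\<lambda>k. h \<otimes> k) -` A \<inter> space M"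
        by (auto simp: space_eq topspace_X mult_inv_cancel_left)
    qed
    then show "emeasure (distr M M (\<lambda>k. h \<otimes> k)) A = emeasure M A"
      using A meas inv_h haar by (simp add: emeasure_distr normalized_haar_def)
  qed simp
  moreover have "(LINT k|M. \<phi> (h \<otimes> k)) = integral\<^sup>L (distr M M (\<lambda>k. h \<otimes> k)) \<phi>"
    by (rule integral_distr[OF meas borel_measurable_continuous_map[OF \<phi>], symmetric])
  ultimately show ?thesis by simp
qed

end

section \<open>The approximate equation averaged over conjugation by K\<close>

lemma (in group) unitary_character_one:
  assumes "unitary_character G X \<mu>"
  shows "\<mu> \<one> = 1"
proof -
  from assms have "\<mu> \<one> = \<mu> \<one> * \<mu> \<one>" and "\<mu> \<one> \<noteq> 0"
    unfolding unitary_character_def by (metis l_one one_closed, force)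
  then show ?thesis by (simp add: mult_cancel_left1)
qed

lemma (in group) unitary_character_mult_inv:
  assumes "unitary_character G X \<mu>" and "a \<in> carrier G"
  shows "\<mu> a * \<mu> (inv a) = 1"
proof -
  have "\<mu> (a \<otimes> inv a) = \<mu> a * \<mu> (inv a)"
    using assms inv_closed unfolding unitary_character_def by blast
  with assms unitary_character_one[OF assms(1)] show ?thesis by simp
qed

lemma (in group) unitary_character_conj:
  assumes "unitary_character G X \<mu>" and "a \<in> carrier G" "b \<in> carrier G" "k \<in> carrier G"
  shows "\<mu> (a \<otimes> k \<otimes> b \<otimes> inv k) = \<mu> a * \<mu> b"
  using assms unitary_character_mult_inv[OF assms(1,4)]
  by (simp add: unitary_character_def mult.assoc mult.left_commute)

locale approximate_wilson = compact_subgroup_haar +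
  fixes \<mu> f g :: "'a \<Rightarrow> complex" and \<delta> :: real
  assumes character: "unitary_character G X \<mu>"
    and continuous_f: "continuous_map X euclidean f" and continuous_g: "continuous_map X euclidean g"
    and stability: "\<forall>x\<in>carrier G. \<forall>y\<in>carrier G.
           cmod ((LINT k|M. f (x \<otimes> k \<otimes> y \<otimes> inv k)) + \<mu> y * (LINT k|M. f (x \<otimes> k \<otimes> inv y \<otimes> inv k))
               - 2 * f x * g y) \<le> \<delta>"
begin

definition conj_mean :: "('a \<Rightarrow> complex) \<Rightarrow> 'a \<Rightarrow> 'a \<Rightarrow> complex" where
  "conj_mean \<phi> a b = (LINT k|M. \<phi> (a \<otimes> k \<otimes> b \<otimes> inv k))"

lemma stability_conj_mean:
  "x \<in> carrier G \<Longrightarrow> y \<in> carrier G \<Longrightarrow>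
     cmod (conj_mean f x y + \<mu> y * conj_mean f x (inv y) - 2 * f x * g y) \<le> \<delta>"
  using stability by (simp add: conj_mean_def)

lemma continuous_map_conj_mean:
  assumes \<phi>: "continuous_map X euclidean \<phi>" and a: "continuous_map T X a" and b: "continuous_map T X b"
  shows "continuous_map T euclidean (\<lambda>k. conj_mean \<phi> (a k) (b k))"
proof -
  have a': "continuous_map (prod_topology T T) X (\<lambda>p. a (snd p))"
    and b': "continuous_map (prod_topology T T) X (\<lambda>p. b (snd p))"
    using continuous_map_compose[OF continuous_map_snd a] continuous_map_compose[OF continuous_map_snd b]
    by (simp_all add: o_def)
  have "continuous_map (prod_topology T T) euclidean
      (\<lambda>p. \<phi> (a (snd p) \<otimes> fst p \<otimes> b (snd p) \<otimes> inv (fst p)))"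
    by (intro continuous_map_euclidean_comp[OF \<phi>] continuous_map_G_intros a' b')
  from continuous_map_parametric_integral[OF this] show ?thesis by (simp add: conj_mean_def)
qed

lemma integrated_stability:
  assumes u: "continuous_map T X u" and v: "continuous_map T X v" and c: "\<And>k. k \<in> K \<Longrightarrow> \<mu> (v k) = c"
  shows "cmod ((LINT k|M. conj_mean f (u k) (v k)) + c * (LINT k|M. conj_mean f (u k) (inv (v k)))
            - 2 * (LINT k|M. f (u k) * g (v k))) \<le> \<delta>"
proof -
  have int1: "integrable M (\<lambda>k. conj_mean f (u k) (v k))"
    and int2: "integrable M (\<lambda>k. conj_mean f (u k) (inv (v k)))"
    and int3: "integrable M (\<lambda>k. f (u k) * g (v k))"
    by (intro integrable_continuous_map continuous_map_conj_mean continuous_map_euclidean_mult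
        continuous_map_euclidean_comp[OF continuous_f] continuous_map_euclidean_comp[OF continuous_g]
        continuous_f u v continuous_map_G_inv)+
  have "cmod (conj_mean f (u k) (v k) + c * conj_mean f (u k) (inv (v k)) - 2 * (f (u k) * g (v k))) \<le> \<delta>"
    if "k \<in> topspace T" for k
  proof -
    have "u k \<in> carrier G" "v k \<in> carrier G" "k \<in> K"
      using that u v topspace_X topspace_T by (auto simp: continuous_map_def)
    then show ?thesis using stability_conj_mean[of "u k" "v k"] c by (simp add: mult.assoc)
  qed
  then have "cmod ((LINT k|M. conj_mean f (u k) (v k) + c * conj_mean f (u k) (inv (v k)))
      - (LINT k|M. 2 * (f (u k) * g (v k)))) \<le> \<delta>"
    using int1 int2 int3 by (intro norm_integral_diff_le) auto
  then show ?thesis using int1 int2 by simp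
qed

lemma approx_f_mult_conj_mean_g:
  assumes "x \<in> carrier G" "a \<in> carrier G" "b \<in> carrier G"
  shows "cmod ((LINT k|M. conj_mean f x (a \<otimes> k \<otimes> b \<otimes> inv k))
           + \<mu> a * \<mu> b * (LINT k|M. conj_mean f x (inv (a \<otimes> k \<otimes> b \<otimes> inv k)))
           - 2 * f x * conj_mean g a b) \<le> \<delta>"
proof -
  have "continuous_map T X (\<lambda>k. a \<otimes> k \<otimes> b \<otimes> inv k)"
    by (intro continuous_map_G_intros assms)
  moreover have "\<mu> (a \<otimes> k \<otimes> b \<otimes> inv k) = \<mu> a * \<mu> b" if "k \<in> K" for k
    using assms that K_subset_carrier unitary_character_conj[OF character] by blast
  ultimately show ?thesis
    using integrated_stability[OF continuous_map_G_const[OF assms(1)], of _ "\<mu> a * \<mu> b"]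
    by (simp add: conj_mean_def mult.assoc)
qed

lemma approx_g_mult_conj_mean_f:
  assumes "x \<in> carrier G" "c \<in> carrier G" "z \<in> carrier G"
  shows "cmod ((LINT h|M. conj_mean f (x \<otimes> h \<otimes> c \<otimes> inv h) z)
           + \<mu> z * (LINT h|M. conj_mean f (x \<otimes> h \<otimes> c \<otimes> inv h) (inv z))
           - 2 * g z * conj_mean f x c) \<le> \<delta>"
proof -
  have "continuous_map T X (\<lambda>h. x \<otimes> h \<otimes> c \<otimes> inv h)"
    by (intro continuous_map_G_intros assms)
  from integrated_stability[OF this continuous_map_G_const[OF assms(3)], of "\<mu> z"] show ?thesis
    by (simp add: conj_mean_def mult_ac)
qed

lemma integral_conj_mean_conj:
  assumes \<phi>: "continuous_map X euclidean \<phi>"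
    and x: "x \<in> carrier G" and a: "a \<in> carrier G" and b: "b \<in> carrier G"
  shows "(LINT k|M. conj_mean \<phi> x (a \<otimes> k \<otimes> b \<otimes> inv k)) = (LINT h|M. conj_mean \<phi> (x \<otimes> h \<otimes> a \<otimes> inv h) b)"
proof -
  have "(LINT k|M. conj_mean \<phi> x (a \<otimes> k \<otimes> b \<otimes> inv k))
      = (LINT h|M. LINT k|M. \<phi> (x \<otimes> h \<otimes> (a \<otimes> k \<otimes> b \<otimes> inv k) \<otimes> inv h))"
    unfolding conj_mean_def
    by (rule integral_swap_continuous) (intro continuous_map_euclidean_comp[OF \<phi>] continuous_map_G_intros x a b)
  also have "\<dots> = (LINT h|M. conj_mean \<phi> (x \<otimes> h \<otimes> a \<otimes> inv h) b)"
  proof (rule Bochner_Integration.integral_cong[OF refl])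
    fix h assume "h \<in> space M"
    then have hK: "h \<in> K" and h: "h \<in> carrier G" using space_eq topspace_T K_subset_carrier by auto
    have "(LINT k|M. \<phi> (x \<otimes> h \<otimes> (a \<otimes> k \<otimes> b \<otimes> inv k) \<otimes> inv h))
        = (LINT k|M. \<phi> (x \<otimes> h \<otimes> a \<otimes> inv h \<otimes> (h \<otimes> k) \<otimes> b \<otimes> inv (h \<otimes> k)))"
    proof (rule Bochner_Integration.integral_cong[OF refl])
      fix k assume "k \<in> space M"
      then have "k \<in> carrier G" using space_eq topspace_T K_subset_carrier by auto
      with x a b h show "\<phi> (x \<otimes> h \<otimes> (a \<otimes> k \<otimes> b \<otimes> inv k) \<otimes> inv h)
          = \<phi> (x \<otimes> h \<otimes> a \<otimes> inv h \<otimes> (h \<otimes> k) \<otimes> b \<otimes> inv (h \<otimes> k))"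
        by (simp add: m_assoc inv_mult_group inv_mult_cancel_left mult_inv_cancel_left)
    qed
    also have "\<dots> = conj_mean \<phi> (x \<otimes> h \<otimes> a \<otimes> inv h) b"
      unfolding conj_mean_def
      by (rule integral_left_translation[OF hK, of "\<lambda>k. \<phi> (x \<otimes> h \<otimes> a \<otimes> inv h \<otimes> k \<otimes> b \<otimes> inv k)"])
         (intro continuous_map_euclidean_comp[OF \<phi>] continuous_map_G_intros x a b h)
    finally show "(LINT k|M. \<phi> (x \<otimes> h \<otimes> (a \<otimes> k \<otimes> b \<otimes> inv k) \<otimes> inv h))
        = conj_mean \<phi> (x \<otimes> h \<otimes> a \<otimes> inv h) b" .
  qed
  finally show ?thesis .
qed

lemma integral_conj_mean_inv_conj:
  assumes \<phi>: "continuous_map X euclidean \<phi>"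
    and x: "x \<in> carrier G" and a: "a \<in> carrier G" and b: "b \<in> carrier G"
  shows "(LINT k|M. conj_mean \<phi> x (inv (a \<otimes> k \<otimes> b \<otimes> inv k)))
       = (LINT k|M. conj_mean \<phi> (x \<otimes> k \<otimes> inv b \<otimes> inv k) (inv a))"
proof -
  have "(LINT k|M. conj_mean \<phi> x (inv (a \<otimes> k \<otimes> b \<otimes> inv k)))
      = (LINT h|M. LINT k|M. \<phi> (x \<otimes> h \<otimes> inv (a \<otimes> k \<otimes> b \<otimes> inv k) \<otimes> inv h))"
    unfolding conj_mean_def
    by (rule integral_swap_continuous) (intro continuous_map_euclidean_comp[OF \<phi>] continuous_map_G_intros x a b)
  also have "\<dots> = (LINT h|M. LINT k|M. \<phi> (x \<otimes> k \<otimes> inv b \<otimes> inv k \<otimes> h \<otimes> inv a \<otimes> inv h))"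
  proof (rule Bochner_Integration.integral_cong[OF refl])
    fix h assume "h \<in> space M"
    then have hK: "h \<in> K" and h: "h \<in> carrier G" using space_eq topspace_T K_subset_carrier by auto
    have "(LINT k|M. \<phi> (x \<otimes> h \<otimes> inv (a \<otimes> k \<otimes> b \<otimes> inv k) \<otimes> inv h))
        = (LINT k|M. \<phi> (x \<otimes> (h \<otimes> k) \<otimes> inv b \<otimes> inv (h \<otimes> k) \<otimes> h \<otimes> inv a \<otimes> inv h))"
    proof (rule Bochner_Integration.integral_cong[OF refl])
      fix k assume "k \<in> space M"
      then have "k \<in> carrier G" using space_eq topspace_T K_subset_carrier by auto
      with x a b h show "\<phi> (x \<otimes> h \<otimes> inv (a \<otimes> k \<otimes> b \<otimes> inv k) \<otimes> inv h)
          = \<phi> (x \<otimes> (h \<otimes> k) \<otimes> inv b \<otimes> inv (h \<otimes> k) \<otimes> h \<otimes> inv a \<otimes> inv h)"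
        by (simp add: m_assoc inv_mult_group inv_mult_cancel_left mult_inv_cancel_left)
    qed
    also have "\<dots> = (LINT k|M. \<phi> (x \<otimes> k \<otimes> inv b \<otimes> inv k \<otimes> h \<otimes> inv a \<otimes> inv h))"
      by (rule integral_left_translation[OF hK, of "\<lambda>k. \<phi> (x \<otimes> k \<otimes> inv b \<otimes> inv k \<otimes> h \<otimes> inv a \<otimes> inv h)"])
         (intro continuous_map_euclidean_comp[OF \<phi>] continuous_map_G_intros x a b h)
    finally show "(LINT k|M. \<phi> (x \<otimes> h \<otimes> inv (a \<otimes> k \<otimes> b \<otimes> inv k) \<otimes> inv h))
        = (LINT k|M. \<phi> (x \<otimes> k \<otimes> inv b \<otimes> inv k \<otimes> h \<otimes> inv a \<otimes> inv h))" .
  qed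
  also have "\<dots> = (LINT k|M. conj_mean \<phi> (x \<otimes> k \<otimes> inv b \<otimes> inv k) (inv a))"
    unfolding conj_mean_def
    by (rule integral_swap_continuous[symmetric])
       (intro continuous_map_euclidean_comp[OF \<phi>] continuous_map_G_intros x a b)
  finally show ?thesis .
qed

lemma wilson_defect_bound:
  assumes x: "x \<in> carrier G" and y: "y \<in> carrier G" and z: "z \<in> carrier G"
  shows "2 * cmod (f x) * cmod (conj_mean g y z + \<mu> z * conj_mean g y (inv z) + conj_mean g z y
           + \<mu> z * conj_mean g (inv z) y - 4 * g y * g z)
         \<le> (8 + 2 * cmod (g y) + 2 * cmod (g z)) * \<delta>"
proof -
  define Q where "Q c b = (LINT h|M. conj_mean f (x \<otimes> h \<otimes> c \<otimes> inv h) b)" for c b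
  define EA where "EA a b = 2 * f x * conj_mean g a b - (Q a b + \<mu> a * \<mu> b * Q (inv b) (inv a))" for a b
  define ED where "ED c b = Q c b + \<mu> b * Q c (inv b) - 2 * g b * conj_mean f x c" for c b
  define EH where "EH b = conj_mean f x b + \<mu> b * conj_mean f x (inv b) - 2 * f x * g b" for b
  have EA: "cmod (EA a b) \<le> \<delta>" if "a \<in> carrier G" "b \<in> carrier G" for a b
    using approx_f_mult_conj_mean_g[OF x that] integral_conj_mean_conj[OF continuous_f x that]
      integral_conj_mean_inv_conj[OF continuous_f x that]
    by (simp add: EA_def Q_def norm_minus_commute)
  have ED: "cmod (ED c b) \<le> \<delta>" if "c \<in> carrier G" "b \<in> carrier G" for c b
    using approx_g_mult_conj_mean_f[OF x that] by (simp add: ED_def Q_def)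
  have EH: "cmod (EH b) \<le> \<delta>" if "b \<in> carrier G" for b
    using stability_conj_mean[OF x that] by (simp add: EH_def)
  \<comment> \<open>every Q-term occurs once in an EA and once in an ED and cancels, using \<open>\<mu> z * \<mu> (inv z) = 1\<close>\<close>
  have identity: "2 * f x * (conj_mean g y z + \<mu> z * conj_mean g y (inv z) + conj_mean g z y
        + \<mu> z * conj_mean g (inv z) y - 4 * g y * g z)
      = EA y z + \<mu> z * EA y (inv z) + EA z y + \<mu> z * EA (inv z) y
        + ED y z + \<mu> y * ED (inv y) z + ED z y + \<mu> z * ED (inv z) y
        + 2 * g z * EH y + 2 * g y * EH z"
    using unitary_character_mult_inv[OF character z] z
    unfolding EA_def ED_def EH_def by simp algebra
  have unit: "cmod (\<mu> c * a) \<le> r" if "c \<in> carrier G" "cmod a \<le> r" for c a r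
    using character that by (simp add: unitary_character_def norm_mult)
  have scale: "cmod (2 * c * a) \<le> 2 * cmod c * r" if "cmod a \<le> r" for c a r
    using that by (simp add: norm_mult mult_left_mono)
  have "cmod (2 * f x * (conj_mean g y z + \<mu> z * conj_mean g y (inv z) + conj_mean g z y
        + \<mu> z * conj_mean g (inv z) y - 4 * g y * g z))
      \<le> \<delta> + \<delta> + \<delta> + \<delta> + \<delta> + \<delta> + \<delta> + \<delta> + 2 * cmod (g z) * \<delta> + 2 * cmod (g y) * \<delta>"
    unfolding identity
    by (intro norm_triangle_mono unit scale EA ED EH y z inv_closed)
  then show ?thesis unfolding norm_mult by (simp add: algebra_simps)
qed

lemma wilson_identity:
  assumes unbounded: "\<not> bounded (f ` carrier G)" and y: "y \<in> carrier G" and z: "z \<in> carrier G"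
  shows "conj_mean g y z + \<mu> z * conj_mean g y (inv z) + conj_mean g z y + \<mu> z * conj_mean g (inv z) y
       = 4 * g y * g z"
proof (rule ccontr)
  define D where "D = conj_mean g y z + \<mu> z * conj_mean g y (inv z) + conj_mean g z y
      + \<mu> z * conj_mean g (inv z) y - 4 * g y * g z"
  define C where "C = (8 + 2 * cmod (g y) + 2 * cmod (g z)) * \<delta>"
  assume "\<not> ?thesis"
  then have "cmod D > 0" by (simp add: D_def)
  then have "cmod (f x) \<le> C / (2 * cmod D)" if "x \<in> carrier G" for x
    using wilson_defect_bound[OF that y z] by (simp add: D_def C_def pos_le_divide_eq mult_ac)
  then have "bounded (f ` carrier G)" unfolding bounded_iff by blast
  with unbounded show False ..
qed

end

theorem lemma5p4:
  fixes G :: "('a, 'b) monoid_scheme" and X :: "'a topology"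
    and K :: "'a set" and M :: "'a measure"
    and \<mu> f g :: "'a \<Rightarrow> complex" and \<delta> :: real
  assumes "locally_compact_group G X"
    and "subgroup K G" and "compactin X K"
    and "normalized_haar G X K M"
    and "\<delta> > 0"
    and "unitary_character G X \<mu>"
    and "continuous_map X euclidean f" and "continuous_map X euclidean g"
    and "\<not> bounded (f ` carrier G)"
    and "\<forall>x\<in>carrier G. \<forall>y\<in>carrier G.
           cmod ((LINT k|M. f (x \<otimes>\<^bsub>G\<^esub> k \<otimes>\<^bsub>G\<^esub> y \<otimes>\<^bsub>G\<^esub> inv\<^bsub>G\<^esub> k))
               + \<mu> y * (LINT k|M. f (x \<otimes>\<^bsub>G\<^esub> k \<otimes>\<^bsub>G\<^esub> inv\<^bsub>G\<^esub> y \<otimes>\<^bsub>G\<^esub> inv\<^bsub>G\<^esub> k))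
               - 2 * f x * g y) \<le> \<delta>"
  shows "\<forall>x\<in>carrier G. \<forall>y\<in>carrier G.
           (LINT k|M. g (x \<otimes>\<^bsub>G\<^esub> k \<otimes>\<^bsub>G\<^esub> y \<otimes>\<^bsub>G\<^esub> inv\<^bsub>G\<^esub> k))
           + \<mu> y * (LINT k|M. g (x \<otimes>\<^bsub>G\<^esub> k \<otimes>\<^bsub>G\<^esub> inv\<^bsub>G\<^esub> y \<otimes>\<^bsub>G\<^esub> inv\<^bsub>G\<^esub> k))
           + (LINT k|M. g (y \<otimes>\<^bsub>G\<^esub> k \<otimes>\<^bsub>G\<^esub> x \<otimes>\<^bsub>G\<^esub> inv\<^bsub>G\<^esub> k))
           + \<mu> y * (LINT k|M. g (inv\<^bsub>G\<^esub> y \<otimes>\<^bsub>G\<^esub> k \<otimes>\<^bsub>G\<^esub> x \<otimes>\<^bsub>G\<^esub> inv\<^bsub>G\<^esub> k))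
           = 4 * g x * g y"
proof -
  interpret approximate_wilson G X K M \<mu> f g \<delta>
    using assms by (simp add: approximate_wilson_def approximate_wilson_axioms_def compact_subgroup_haar_def)
  show ?thesis
    using wilson_identity[OF assms(9)] by (simp add: conj_mean_def)
qed

end
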